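(* Consider online caching with catalogue size $N$, cache capacity $C$ with $C<N/2$, batch size $B$ and horizon $T$, where the learner observes the exact request vectors (i.e. $\hat r_t=r_t$). The NFPL algorithm with $\eta=B\sqrt{T/(2C)}$ (i.e. Follow the Perturbed Leader with uniform noise on $[0,\eta]^N$) satisfies $$\bar{\mathcal{R}}_T(\mathrm{FPL})\le 2\sqrt{2}\,B\sqrt{C\,T}.$$
   Context: Online caching setting: files are indexed by $\{1,\dots,N\}$. At each time slot $t=1,\dots,T$ a batch of $B$ requests arrives, summarized by $r_t\in\mathbb{N}^N$ with $r_{t,i}$ the number of requests for file $i$ and $\sum_i r_{t,i}=B$; the sequence $r_1,\dots,r_T$ is fixed in advance (oblivious). The decision set is the capped simplex $\mathcal{X}=\{x\in[0,1]^N:\sum_{i=1}^N x_i=C\}$ and the cost of decision $x$ at slot $t$ is $\langle r_t,x\rangle$. For $s\in\mathbb{R}^N$, $M(s)\in\arg\min_{x\in\mathcal{X}}\langle s,x\rangle$. The NFPL algorithm with parameter $\eta$: at each slot $t$ draw $\gamma_t$ uniformly from $[0,\eta]^N$ (independently), play $x_t=M\big(\sum_{s<t}\hat r_s+\gamma_t\big)$, then observe $\hat r_t$. The (weak/pseudo) regret is $\bar{\mathcal{R}}_T=\mathbb{E}\big[\sum_{t=1}^T\langle r_t,x_t\rangle\big]-\min_{x\in\mathcal{X}}\sum_{t=1}^T\langle r_t,x\rangle$, expectation over all the algorithm's randomness. *)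

theory Defs
  imports "HOL-Probability.Probability"
begin

text \<open>Files are indexed by a finite type 'n, so N = CARD('n).
  Vectors in R^N are elements of real^'n.\<close>

definition capped_simplex :: "nat \<Rightarrow> (real^'n) set" where
  "capped_simplex C = {x. (\<forall>i. 0 \<le> x $ i \<and> x $ i \<le> 1) \<and> (\<Sum>i\<in>UNIV. x $ i) = real C}"

definition is_min_oracle :: "nat \<Rightarrow> (real^'n \<Rightarrow> real^'n) \<Rightarrow> bool" where
  "is_min_oracle C M \<longleftrightarrow> (\<forall>s. M s \<in> capped_simplex C \<and> (\<forall>y\<in>capped_simplex C. s \<bullet> M s \<le> s \<bullet> y))"

definition unif_box :: "real \<Rightarrow> (real^'n) measure" where
  "unif_box \<eta> = uniform_measure lebesgue (cbox 0 (\<chi> i. \<eta>))"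

text \<open>Expected cost of NFPL (with exact observations) over slots 0..T-1 (slot t here is slot t+1
  of the paper); the noise vectors gamma_0..gamma_{T-1} are i.i.d. uniform on [0,eta]^N.\<close>
definition nfpl_expected_cost ::
  "nat \<Rightarrow> (real^'n \<Rightarrow> real^'n) \<Rightarrow> real \<Rightarrow> (nat \<Rightarrow> real^'n) \<Rightarrow> real" where
  "nfpl_expected_cost T M \<eta> r =
     (\<integral>\<gamma>. (\<Sum>t<T. r t \<bullet> M ((\<Sum>s<t. r s) + \<gamma> t)) \<partial>(PiM {..<T} (\<lambda>_. unif_box \<eta>)))"

definition nfpl_regret ::
  "nat \<Rightarrow> nat \<Rightarrow> (real^'n \<Rightarrow> real^'n) \<Rightarrow> real \<Rightarrow> (nat \<Rightarrow> real^'n) \<Rightarrow> real" where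
  "nfpl_regret C T M \<eta> r =
     nfpl_expected_cost T M \<eta> r - (INF x\<in>capped_simplex C. (\<Sum>t<T. r t \<bullet> x))"

end

theory Submission
  imports Defs
begin

(* Be the leader: playing with one step of
   look-ahead, M (R_(t+1) + gamma), costs at most min_x R_T . x + gamma . x - gamma . M gamma, hence at
   most the best fixed decision plus eta C. Stability: the decision of slot t+1 is that of slot t with
   the noise shifted by r_t >= 0, and shifting the box [0,eta]^N by r_t moves at most |r_t|_1 eta^(N-1)
   of its volume, so the expected cost r_t . x_t, which lies in [0,B], changes by at most B^2/eta.
   Hence the regret is at most eta C + T B^2/eta, which equals (3/sqrt 2) B sqrt (C T) for the given eta.
   The minimiser selection M is arbitrary, so measurability needs an argument: almost surely the
   perturbed cumulative cost has distinct entries, and then the minimiser is unique, namely the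
   indicator of the C cheapest files. *)

section \<open>Linear minimisation over the capped simplex\<close>

lemma capped_simplexD:
  assumes "x \<in> capped_simplex C"
  shows "0 \<le> x $ i" "x $ i \<le> 1" "(\<Sum>i\<in>UNIV. x $ i) = real C"
  using assms by (auto simp: capped_simplex_def)

lemma min_oracle_in_capped_simplex: "is_min_oracle C M \<Longrightarrow> M s \<in> capped_simplex C"
  and min_oracle_le: "is_min_oracle C M \<Longrightarrow> y \<in> capped_simplex C \<Longrightarrow> s \<bullet> M s \<le> s \<bullet> y"
  by (auto simp: is_min_oracle_def)

lemma capped_simplex_inner_nonneg:
  "x \<in> capped_simplex C \<Longrightarrow> (\<And>i. 0 \<le> a $ i) \<Longrightarrow> 0 \<le> a \<bullet> x"
  unfolding inner_vec_def by (intro sum_nonneg) (simp add: capped_simplexD(1))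

lemma capped_simplex_inner_le_sum:
  "x \<in> capped_simplex C \<Longrightarrow> (\<And>i. 0 \<le> a $ i) \<Longrightarrow> a \<bullet> x \<le> (\<Sum>i\<in>UNIV. a $ i)"
  unfolding inner_vec_def by (intro sum_mono) (simp add: capped_simplexD(2) mult_left_le)

lemma capped_simplex_inner_le_bound:
  assumes x: "x \<in> capped_simplex C" and a: "\<And>i. a $ i \<le> \<eta>"
  shows "a \<bullet> x \<le> \<eta> * real C"
proof -
  have "a \<bullet> x \<le> (\<Sum>i\<in>UNIV. \<eta> * x $ i)"
    unfolding inner_vec_def using a capped_simplexD(1)[OF x] by (auto intro!: sum_mono mult_right_mono)
  also have "\<dots> = \<eta> * real C" by (simp add: capped_simplexD(3)[OF x] flip: sum_distrib_left)
  finally show ?thesis .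
qed

lemma min_oracle_inner_nonneg: "is_min_oracle C M \<Longrightarrow> (\<And>i. 0 \<le> a $ i) \<Longrightarrow> 0 \<le> a \<bullet> M s"
  by (rule capped_simplex_inner_nonneg[OF min_oracle_in_capped_simplex])

lemma min_oracle_inner_le_sum:
  "is_min_oracle C M \<Longrightarrow> (\<And>i. 0 \<le> a $ i) \<Longrightarrow> a \<bullet> M s \<le> (\<Sum>i\<in>UNIV. a $ i)"
  by (rule capped_simplex_inner_le_sum[OF min_oracle_in_capped_simplex])

lemma capped_simplex_argmin_exchange:
  fixes x s :: "real^'n"
  assumes x: "x \<in> capped_simplex C" and opt: "\<forall>y\<in>capped_simplex C. s \<bullet> x \<le> s \<bullet> y"
    and less: "s $ i < s $ k"
  shows "x $ i = 1 \<or> x $ k = 0"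
proof (rule ccontr)
  assume "\<not> (x $ i = 1 \<or> x $ k = 0)"
  with capped_simplexD[OF x] have xi: "x $ i < 1" and xk: "0 < x $ k"
    by (metis order_le_less)+
  have "i \<noteq> k" using less by auto
  define e where "e = min (1 - x $ i) (x $ k)"
  have e: "0 < e" "e \<le> 1 - x $ i" "e \<le> x $ k" using xi xk by (auto simp: e_def)
  \<comment> \<open>Moving mass \<open>e\<close> from the costlier coordinate \<open>k\<close> to \<open>i\<close> stays feasible and lowers the cost.\<close>
  define y where "y = x + e *\<^sub>R (axis i 1 - axis k 1)"
  have y: "y $ j = x $ j + (if j = i then e else 0) - (if j = k then e else 0)" for j
    by (simp add: y_def axis_def)
  have "0 \<le> y $ j \<and> y $ j \<le> 1" for j
    using capped_simplexD(1,2)[OF x, of j] e \<open>i \<noteq> k\<close> by (auto simp: y)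
  moreover have "(\<Sum>j\<in>UNIV. y $ j) = real C"
    using capped_simplexD(3)[OF x] by (simp add: y sum.distrib sum_subtractf)
  ultimately have "y \<in> capped_simplex C" by (simp add: capped_simplex_def)
  moreover have "s \<bullet> y = s \<bullet> x + e * (s $ i - s $ k)"
    by (simp add: y_def inner_add_right inner_diff_right inner_axis algebra_simps)
  moreover have "e * (s $ i - s $ k) < 0" using e less by (simp add: mult_pos_neg)
  ultimately show False using opt by fastforce
qed

definition top_indicator :: "nat \<Rightarrow> real^'n \<Rightarrow> real^'n" where
  "top_indicator C s = (\<chi> i. if card {j. s $ j < s $ i} < C then 1 else 0)"

lemma capped_simplex_argmin_eq_top_indicator:
  fixes x s :: "real^'n"
  assumes x: "x \<in> capped_simplex C" and opt: "\<forall>y\<in>capped_simplex C. s \<bullet> x \<le> s \<bullet> y"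
    and inj: "inj (\<lambda>i. s $ i)"
  shows "x = top_indicator C s"
proof (rule vec_eq_iff[THEN iffD2], rule allI)
  fix i
  define k where "k = card {j. s $ j < s $ i}"
  have sum_below: "(\<Sum>j\<in>UNIV. of_bool (s $ j < s $ i) + (if j = i then x $ i else 0)) = real k + x $ i"
    by (simp add: k_def sum.distrib)
  have greater: "s $ i < s $ j" if "\<not> s $ j < s $ i" "j \<noteq> i" for j
    using that inj by (metis injD linorder_neqE_linordered_idom)
  \<comment> \<open>By the exchange lemma a fractional or wrongly filled coordinate \<open>i\<close> forces all costlier
    coordinates to be empty, or all cheaper ones to be full, and then the total mass is not \<open>C\<close>.\<close>
  show "x $ i = top_indicator C s $ i"
  proof (cases "k < C")
    case True
    have "x $ i = 1"
    proof (rule ccontr)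
      assume "x $ i \<noteq> 1"
      then have xi: "x $ i < 1" using capped_simplexD(2)[OF x, of i] by simp
      have "x $ j \<le> of_bool (s $ j < s $ i) + (if j = i then x $ i else 0)" for j
      proof (cases "s $ j < s $ i \<or> j = i")
        case True then show ?thesis using capped_simplexD(2)[OF x, of j] by auto
      next
        case False
        then have "x $ j = 0" using capped_simplex_argmin_exchange[OF x opt greater, of j] xi by auto
        then show ?thesis using False by simp
      qed
      then have "real C \<le> real k + x $ i"
        unfolding capped_simplexD(3)[OF x, symmetric] sum_below[symmetric] by (rule sum_mono)
      with True xi show False by linarith
    qed
    with True show ?thesis by (simp add: top_indicator_def k_def)
  next
    case False
    have "x $ i = 0"
    proof (rule ccontr)
      assume "x $ i \<noteq> 0"
      then have xi: "0 < x $ i" using capped_simplexD(1)[OF x, of i] by simp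
      have "of_bool (s $ j < s $ i) + (if j = i then x $ i else 0) \<le> x $ j" for j
      proof (cases "s $ j < s $ i")
        case True
        then have "x $ j = 1" using capped_simplex_argmin_exchange[OF x opt True] xi by auto
        then show ?thesis using True by auto
      next
        case False then show ?thesis using capped_simplexD(1)[OF x, of j] by auto
      qed
      then have "real k + x $ i \<le> real C"
        unfolding capped_simplexD(3)[OF x, symmetric] sum_below[symmetric] by (rule sum_mono)
      with False xi show False by linarith
    qed
    with False show ?thesis by (simp add: top_indicator_def k_def)
  qed
qed

lemma min_oracle_eq_top_indicator:
  assumes "is_min_oracle C M" and "inj (\<lambda>i. s $ i)"
  shows "M s = top_indicator C s"
  using assms capped_simplex_argmin_eq_top_indicator[of "M s" C s]
  unfolding is_min_oracle_def by blast

section \<open>Lebesgue measure and the uniform noise\<close>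

lemma measure_lebesgue_cbox_zero_cart:
  fixes v :: "real^'n"
  assumes "\<And>j. 0 \<le> v $ j"
  shows "measure lebesgue (cbox 0 v) = (\<Prod>j\<in>UNIV. v $ j)"
proof -
  have "cbox 0 v \<noteq> {}" using assms by (auto simp: interval_eq_empty_cart not_less)
  then show ?thesis by (simp add: measure_completion content_cbox_cart)
qed

lemma measure_lebesgue_cube:
  "0 \<le> \<eta> \<Longrightarrow> measure lebesgue (cbox 0 (\<chi> i. \<eta>) :: (real^'n) set) = \<eta> ^ CARD('n)"
  using measure_lebesgue_cbox_zero_cart[of "\<chi> i. \<eta>"] by simp

lemma prob_space_unif_box: "0 < \<eta> \<Longrightarrow> prob_space (unif_box \<eta> :: (real^'n) measure)"
  unfolding unif_box_def
  using measure_lebesgue_cube[of \<eta>, where 'n='n]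
  by (intro prob_space_uniform_measure) (simp_all add: emeasure_eq_measure2)

lemma integral_uniform_measure:
  fixes f :: "'a \<Rightarrow> real"
  assumes S: "S \<in> sets M" and pos: "0 < measure M S" and f: "f \<in> borel_measurable M"
  shows "(\<integral>x. f x \<partial>uniform_measure M S) = (\<integral>x. indicator S x * f x \<partial>M) / measure M S"
proof -
  have "emeasure M S = ennreal (measure M S)"
    using pos by (intro emeasure_eq_ennreal_measure) (auto simp: measure_def)
  then have "indicator S x / emeasure M S = ennreal (indicator S x / measure M S)" for x
    using divide_ennreal[of 1 "measure M S"] pos by (simp split: split_indicator)
  then have "uniform_measure M S = density M (\<lambda>x. ennreal (indicator S x / measure M S))"
    unfolding uniform_measure_def by simp
  then have "(\<integral>x. f x \<partial>uniform_measure M S) = (\<integral>x. (indicator S x / measure M S) *\<^sub>R f x \<partial>M)"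
    using S f pos by (simp add: integral_density)
  then show ?thesis by simp
qed

lemma translation_eq_affine:
  "(\<lambda>x. r + (\<Sum>j\<in>Basis. (1 * (x \<bullet> j)) *\<^sub>R j)) = (\<lambda>x::'a::euclidean_space. r + x)"
  by (simp add: euclidean_representation)

lemma lebesgue_measurable_translate: "(\<lambda>x::'a::euclidean_space. r + x) \<in> lebesgue \<rightarrow>\<^sub>M lebesgue"
  using lebesgue_affine_measurable[of "\<lambda>_. 1" r] unfolding translation_eq_affine by simp

lemma integral_lebesgue_translate:
  fixes F :: "'a::euclidean_space \<Rightarrow> real"
  assumes F: "F \<in> borel_measurable lebesgue"
  shows "(\<integral>x. F (r + x) \<partial>lebesgue) = (\<integral>x. F x \<partial>lebesgue)"
proof -
  have "lebesgue = distr lebesgue lebesgue (\<lambda>x::'a. r + x)"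
    using lebesgue_affine_euclidean[of "\<lambda>_. 1" r] unfolding translation_eq_affine by (simp add: density_1)
  then show ?thesis
    using integral_distr[OF lebesgue_measurable_translate F] by metis
qed

lemma integrable_indicator_mult_bounded:
  fixes f :: "'a::euclidean_space \<Rightarrow> real"
  assumes S: "S \<in> lmeasurable" and f: "f \<in> borel_measurable lebesgue" and b: "\<And>x. \<bar>f x\<bar> \<le> b"
  shows "integrable lebesgue (\<lambda>x. indicator S x * f x)"
proof (rule Bochner_Integration.integrable_bound[where f="\<lambda>x. b * indicator S x"])
  show "integrable lebesgue (\<lambda>x. b * indicator S x)"
    using S by (intro integrable_mult_right integrable_real_indicator) (auto simp: fmeasurable_def)
  show "(\<lambda>x. indicator S x * f x) \<in> borel_measurable lebesgue"
    using S f by (intro borel_measurable_times borel_measurable_indicator) (auto simp: fmeasurable_def)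
  show "AE x in lebesgue. norm (indicator S x * f x) \<le> norm (b * indicator S x)"
    using b by (intro AE_I2) (auto simp: indicator_def abs_of_nonneg[OF order_trans[OF abs_ge_zero b]])
qed

lemma integral_indicator_translate_diff_le:
  fixes h :: "'a::euclidean_space \<Rightarrow> real"
  assumes S: "S \<in> lmeasurable" and h: "h \<in> borel_measurable lebesgue"
    and h0: "\<And>x. 0 \<le> h x" and hb: "\<And>x. h x \<le> b"
  shows "(\<integral>x. indicator S x * h x \<partial>lebesgue) - (\<integral>x. indicator S x * h (r + x) \<partial>lebesgue)
    \<le> b * measure lebesgue (S - (+) r ` S)"
proof -
  define T where "T = (+) r ` S"
  have T: "T \<in> lmeasurable" unfolding T_def by (rule measurable_translation[OF S])
  have ST: "S - T \<in> lmeasurable" using S T by (intro fmeasurable_Diff) auto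
  have habs: "\<bar>h x\<bar> \<le> b" for x using h0 hb by (simp add: abs_of_nonneg)
  have "indicator T (r + x) = (indicator S x :: real)" for x
    unfolding T_def by (auto simp: indicator_def)
  then have "(\<integral>x. indicator S x * h (r + x) \<partial>lebesgue) = (\<integral>x. indicator T (r + x) * h (r + x) \<partial>lebesgue)"
    by simp
  also have "\<dots> = (\<integral>x. indicator T x * h x \<partial>lebesgue)"
    using T h by (intro integral_lebesgue_translate borel_measurable_times borel_measurable_indicator)
      (auto simp: fmeasurable_def)
  finally have shifted: "(\<integral>x. indicator S x * h (r + x) \<partial>lebesgue) = (\<integral>x. indicator T x * h x \<partial>lebesgue)" .
  have intT: "integrable lebesgue (\<lambda>x. indicator T x * h x)"
    by (rule integrable_indicator_mult_bounded[OF T h habs])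
  have intST: "integrable lebesgue (\<lambda>x. b * indicator (S - T) x)"
    using ST by (intro integrable_mult_right integrable_real_indicator) (auto simp: fmeasurable_def)
  have "(\<integral>x. indicator S x * h x \<partial>lebesgue) \<le> (\<integral>x. indicator T x * h x + b * indicator (S - T) x \<partial>lebesgue)"
  proof (rule integral_mono')
    show "integrable lebesgue (\<lambda>x. indicator T x * h x + b * indicator (S - T) x)"
      using intT intST by (rule Bochner_Integration.integrable_add)
    show "indicator S x * h x \<le> indicator T x * h x + b * indicator (S - T) x" for x
      using h0[of x] hb[of x] by (auto simp: indicator_def)
    show "0 \<le> indicator T x * h x + b * indicator (S - T) x" for x
      using h0[of x] order_trans[OF h0[of x] hb[of x]] by (auto simp: indicator_def)
  qed
  also have "\<dots> = (\<integral>x. indicator T x * h x \<partial>lebesgue) + b * measure lebesgue (S - T)"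
    using intT intST ST by (simp add: Bochner_Integration.integral_add)
  finally show ?thesis unfolding shifted T_def by simp
qed

lemma measure_cbox_diff_translate_le:
  fixes r :: "real^'n"
  assumes \<eta>: "0 < \<eta>" and r: "\<And>i. 0 \<le> r $ i"
  shows "measure lebesgue (cbox 0 (\<chi> i. \<eta>) - (+) r ` cbox 0 (\<chi> i. \<eta>)) * \<eta>
    \<le> (\<Sum>i\<in>UNIV. r $ i) * \<eta> ^ CARD('n)"
proof -
  define B :: "(real^'n) set" where "B = cbox 0 (\<chi> i. \<eta>)"
  define Bi :: "'n \<Rightarrow> (real^'n) set" where "Bi i = cbox 0 (\<chi> j. if j = i then r $ i else \<eta>)" for i
  have Bi_measure: "measure lebesgue (Bi i) * \<eta> = r $ i * \<eta> ^ CARD('n)" for i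
  proof -
    have "measure lebesgue (Bi i) = (\<Prod>j\<in>UNIV. if j = i then r $ i else \<eta>)"
      unfolding Bi_def
      using measure_lebesgue_cbox_zero_cart[of "\<chi> j. if j = i then r $ i else \<eta>"] r \<eta> by simp
    also have "\<dots> = r $ i * (\<Prod>j\<in>UNIV - {i}. \<eta>)"
      by (subst prod.remove[of UNIV i]) (auto intro: prod.cong)
    finally show ?thesis
      using prod.remove[of UNIV i "\<lambda>_. \<eta>"] by simp
  qed
  \<comment> \<open>A point of \<open>B\<close> that is not in \<open>r + B\<close> has some coordinate below \<open>r $ i\<close>.\<close>
  have "B - (+) r ` B \<subseteq> (\<Union>i. Bi i)"
  proof
    fix x assume x: "x \<in> B - (+) r ` B"
    then have "x - r \<notin> B" by (metis DiffD2 add_diff_cancel_left' diff_add_cancel image_eqI)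
    then obtain i where "\<not> (0 \<le> (x - r) $ i \<and> (x - r) $ i \<le> \<eta>)"
      unfolding B_def mem_box_cart by auto
    moreover have "x $ i \<le> \<eta>" using x by (auto simp: B_def mem_box_cart)
    ultimately have "x $ i < r $ i" using r[of i] by auto
    then show "x \<in> (\<Union>i. Bi i)"
      using x by (auto simp: B_def Bi_def mem_box_cart intro!: exI[of _ i])
  qed
  then have "measure lebesgue (B - (+) r ` B) \<le> measure lebesgue (\<Union>i. Bi i)"
    unfolding B_def Bi_def
    by (intro measure_mono_fmeasurable sets.Diff lebesgue_sets_translation)
      (auto intro!: fmeasurable.finite_UN lmeasurable_cbox)
  also have "\<dots> \<le> (\<Sum>i\<in>UNIV. measure lebesgue (Bi i))"
    unfolding Bi_def by (intro measure_UNION_le) auto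
  finally have "measure lebesgue (B - (+) r ` B) * \<eta> \<le> (\<Sum>i\<in>UNIV. measure lebesgue (Bi i)) * \<eta>"
    using \<eta> by (intro mult_right_mono) auto
  also have "\<dots> = (\<Sum>i\<in>UNIV. measure lebesgue (Bi i) * \<eta>)"
    by (simp add: sum_distrib_right)
  also have "\<dots> = (\<Sum>i\<in>UNIV. r $ i * \<eta> ^ CARD('n))"
    by (simp add: Bi_measure)
  finally show ?thesis unfolding B_def by (simp add: sum_distrib_right)
qed

lemma unif_box_stability:
  fixes h :: "real^'n \<Rightarrow> real" and r :: "real^'n"
  assumes \<eta>: "0 < \<eta>" and h: "h \<in> borel_measurable lebesgue"
    and h0: "\<And>x. 0 \<le> h x" and hb: "\<And>x. h x \<le> b" and r: "\<And>i. 0 \<le> r $ i"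
  shows "(\<integral>x. h x \<partial>unif_box \<eta>) \<le> (\<integral>x. h (r + x) \<partial>unif_box \<eta>) + b * (\<Sum>i\<in>UNIV. r $ i) / \<eta>"
proof -
  define B :: "(real^'n) set" where "B = cbox 0 (\<chi> i. \<eta>)"
  have V: "measure lebesgue B = \<eta> ^ CARD('n)"
    unfolding B_def using \<eta> by (intro measure_lebesgue_cube) simp
  have unif: "(\<integral>x. f x \<partial>unif_box \<eta>) = (\<integral>x. indicator B x * f x \<partial>lebesgue) / \<eta> ^ CARD('n)"
    if "f \<in> borel_measurable lebesgue" for f
    unfolding unif_box_def B_def[symmetric] V[symmetric]
    using that \<eta> V by (intro integral_uniform_measure) (auto simp: B_def)
  have "(\<integral>x. h x \<partial>unif_box \<eta>) - (\<integral>x. h (r + x) \<partial>unif_box \<eta>)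
      = ((\<integral>x. indicator B x * h x \<partial>lebesgue) - (\<integral>x. indicator B x * h (r + x) \<partial>lebesgue)) / \<eta> ^ CARD('n)"
    using h measurable_compose[OF lebesgue_measurable_translate h]
    by (simp add: unif diff_divide_distrib)
  also have "\<dots> \<le> b * measure lebesgue (B - (+) r ` B) / \<eta> ^ CARD('n)"
    using \<eta> by (intro divide_right_mono integral_indicator_translate_diff_le[OF _ h h0 hb])
      (auto simp: B_def)
  also have "\<dots> \<le> b * (\<Sum>i\<in>UNIV. r $ i) / \<eta>"
  proof -
    have "0 \<le> b" using h0 hb order_trans by blast
    then have "b * (measure lebesgue (B - (+) r ` B) * \<eta>) \<le> b * ((\<Sum>i\<in>UNIV. r $ i) * \<eta> ^ CARD('n))"
      unfolding B_def by (intro mult_left_mono measure_cbox_diff_translate_le[OF \<eta> r])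
    then show ?thesis
      using \<eta> by (simp add: field_simps ac_simps)
  qed
  finally show ?thesis by simp
qed

section \<open>Measurability of the played decision\<close>

lemma borel_measurable_inner_top_indicator:
  "(\<lambda>s. a \<bullet> top_indicator C s) \<in> borel_measurable borel"
proof -
  have card: "real (card {j. s $ j < s $ i}) = (\<Sum>j\<in>UNIV. if s $ j < s $ i then 1 else 0)"
    for s :: "real^'n" and i
    by (simp add: sum.If_cases)
  have "a \<bullet> top_indicator C s =
      (\<Sum>i\<in>UNIV. a $ i * (if (\<Sum>j\<in>UNIV. if s $ j < s $ i then 1 else 0) < real C then 1 else 0))" for s
    by (simp add: top_indicator_def inner_vec_def flip: card)
  then show ?thesis by (simp only:) measurable
qed

lemma AE_lebesgue_inj_components:
  fixes c :: "real^'n"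
  shows "AE \<gamma> in lebesgue. inj (\<lambda>i. (c + \<gamma>) $ i)"
proof -
  define H where "H i j = {\<gamma>::real^'n. (axis i 1 - axis j 1) \<bullet> \<gamma> = c $ j - c $ i}" for i j
  have "negligible (H i j)" if "i \<noteq> j" for i j
  proof -
    have "(axis i 1 - axis j 1) $ i \<noteq> (0::real)" using that by (simp add: axis_def)
    then have "axis i 1 - axis j (1::real) \<noteq> 0" by force
    then show ?thesis unfolding H_def by (intro negligible_hyperplane) simp
  qed
  then have "negligible (\<Union>((\<lambda>(i, j). H i j) ` {(i, j). i \<noteq> j}))"
    by (intro negligible_Union) auto
  moreover have "{\<gamma>. \<not> inj (\<lambda>i. (c + \<gamma>) $ i)} \<subseteq> \<Union>((\<lambda>(i, j). H i j) ` {(i, j). i \<noteq> j})"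
    by (auto simp: inj_def H_def inner_diff_left inner_axis' algebra_simps)
  ultimately show ?thesis
    unfolding eventually_ae_filter_negligible by blast
qed

lemma borel_measurable_min_oracle_inner:
  assumes "is_min_oracle C M"
  shows "(\<lambda>\<gamma>. a \<bullet> M (c + \<gamma>)) \<in> borel_measurable lebesgue"
proof (rule borel_measurable_AE)
  show "(\<lambda>\<gamma>. a \<bullet> top_indicator C (c + \<gamma>)) \<in> borel_measurable lebesgue"
    by (intro measurable_completion measurable_compose[OF _ borel_measurable_inner_top_indicator]) simp
  show "AE \<gamma> in lebesgue. a \<bullet> top_indicator C (c + \<gamma>) = a \<bullet> M (c + \<gamma>)"
    using AE_lebesgue_inj_components[of c]
    by eventually_elim (simp add: min_oracle_eq_top_indicator[OF assms])
qed

lemma borel_measurable_unif_box_min_oracle_inner: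
  "is_min_oracle C M \<Longrightarrow> (\<lambda>v. a \<bullet> M (c + v)) \<in> borel_measurable (unif_box \<eta>)"
  unfolding unif_box_def measurable_cong_sets[OF sets_uniform_measure refl]
  by (rule borel_measurable_min_oracle_inner)

lemma integrable_unif_box_min_oracle_inner:
  assumes M: "is_min_oracle C M" and \<eta>: "0 < \<eta>" and a: "\<And>i. 0 \<le> a $ i"
  shows "integrable (unif_box \<eta>) (\<lambda>v. a \<bullet> M (c + v))"
proof -
  interpret prob_space "unif_box \<eta> :: (real^'n) measure" by (rule prob_space_unif_box[OF \<eta>])
  show ?thesis
    using min_oracle_inner_nonneg[OF M a] min_oracle_inner_le_sum[OF M a]
    by (intro integrable_const_bound[where B="\<Sum>i\<in>UNIV. a $ i"] borel_measurable_unif_box_min_oracle_inner[OF M]) auto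
qed

section \<open>Regret of Follow the Perturbed Leader\<close>

lemma be_the_leader:
  fixes r :: "nat \<Rightarrow> real^'n"
  assumes M: "is_min_oracle C M"
  shows "\<gamma> \<bullet> M \<gamma> + (\<Sum>t<n. r t \<bullet> M ((\<Sum>s<Suc t. r s) + \<gamma>))
    \<le> ((\<Sum>s<n. r s) + \<gamma>) \<bullet> M ((\<Sum>s<n. r s) + \<gamma>)"
proof (induction n)
  case 0 then show ?case by simp
next
  case (Suc n)
  let ?L = "(\<Sum>s<n. r s) + \<gamma>" and ?L' = "(\<Sum>s<Suc n. r s) + \<gamma>"
  have "\<gamma> \<bullet> M \<gamma> + (\<Sum>t<Suc n. r t \<bullet> M ((\<Sum>s<Suc t. r s) + \<gamma>))
      = \<gamma> \<bullet> M \<gamma> + (\<Sum>t<n. r t \<bullet> M ((\<Sum>s<Suc t. r s) + \<gamma>)) + r n \<bullet> M ?L'"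
    by simp
  also have "\<dots> \<le> ?L \<bullet> M ?L + r n \<bullet> M ?L'" using Suc by simp
  also have "\<dots> \<le> ?L \<bullet> M ?L' + r n \<bullet> M ?L'"
    using min_oracle_le[OF M min_oracle_in_capped_simplex[OF M]] by simp
  also have "\<dots> = ?L' \<bullet> M ?L'" by (simp add: inner_add_left algebra_simps)
  finally show ?case .
qed

lemma be_the_leader_regret:
  fixes r :: "nat \<Rightarrow> real^'n"
  assumes M: "is_min_oracle C M" and x: "x \<in> capped_simplex C"
    and \<gamma>: "\<And>i. 0 \<le> \<gamma> $ i" "\<And>i. \<gamma> $ i \<le> \<eta>"
  shows "(\<Sum>t<n. r t \<bullet> M ((\<Sum>s<Suc t. r s) + \<gamma>)) \<le> (\<Sum>t<n. r t \<bullet> x) + \<eta> * real C"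
proof -
  let ?L = "(\<Sum>s<n. r s) + \<gamma>"
  have "(\<Sum>t<n. r t \<bullet> M ((\<Sum>s<Suc t. r s) + \<gamma>)) \<le> ?L \<bullet> M ?L - \<gamma> \<bullet> M \<gamma>"
    using be_the_leader[OF M, of \<gamma> r n] by simp
  also have "\<dots> \<le> ?L \<bullet> x"
    using min_oracle_le[OF M x, of ?L] capped_simplex_inner_nonneg[OF min_oracle_in_capped_simplex[OF M, of \<gamma>] \<gamma>(1)]
    by simp
  also have "\<dots> \<le> (\<Sum>t<n. r t \<bullet> x) + \<eta> * real C"
    using capped_simplex_inner_le_bound[OF x \<gamma>(2)] by (simp add: inner_add_left inner_sum_left)
  finally show ?thesis .
qed

lemma nfpl_expected_cost_eq_sum:
  fixes r :: "nat \<Rightarrow> real^'n"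
  assumes M: "is_min_oracle C M" and \<eta>: "0 < \<eta>" and r: "\<And>t i. 0 \<le> r t $ i"
  shows "nfpl_expected_cost T M \<eta> r = (\<Sum>t<T. \<integral>v. r t \<bullet> M ((\<Sum>s<t. r s) + v) \<partial>unif_box \<eta>)"
proof -
  define U where "U = (unif_box \<eta> :: (real^'n) measure)"
  define P where "P = PiM {..<T} (\<lambda>_. U)"
  define f where "f t v = r t \<bullet> M ((\<Sum>s<t. r s) + v)" for t v
  interpret U: prob_space U unfolding U_def by (rule prob_space_unif_box[OF \<eta>])
  interpret P: prob_space P unfolding P_def by (rule prob_space_PiM) (rule U.prob_space_axioms)
  have f: "f t \<in> borel_measurable U" for t
    unfolding f_def U_def by (rule borel_measurable_unif_box_min_oracle_inner[OF M])
  have f_bound: "\<bar>f t v\<bar> \<le> (\<Sum>i\<in>UNIV. r t $ i)" for t v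
    using min_oracle_inner_nonneg[OF M r[of t]] min_oracle_inner_le_sum[OF M r[of t]]
    by (simp add: f_def)
  have proj: "(\<lambda>\<gamma>. \<gamma> t) \<in> P \<rightarrow>\<^sub>M U" if "t < T" for t
    unfolding P_def using that by simp
  have slot: "(\<integral>\<gamma>. f t (\<gamma> t) \<partial>P) = (\<integral>v. f t v \<partial>U)" if "t < T" for t
  proof -
    have "distr P U (\<lambda>\<gamma>. \<gamma> t) = U"
      unfolding P_def using that U.prob_space_axioms by (intro distr_PiM_component) auto
    then show ?thesis using integral_distr[OF proj[OF that] f] by simp
  qed
  have "nfpl_expected_cost T M \<eta> r = (\<integral>\<gamma>. (\<Sum>t<T. f t (\<gamma> t)) \<partial>P)"
    unfolding nfpl_expected_cost_def P_def U_def f_def by simp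
  also have "\<dots> = (\<Sum>t<T. \<integral>\<gamma>. f t (\<gamma> t) \<partial>P)"
    using f_bound measurable_compose[OF proj f]
    by (intro Bochner_Integration.integral_sum P.integrable_const_bound) auto
  also have "\<dots> = (\<Sum>t<T. \<integral>v. f t v \<partial>U)"
    by (rule sum.cong) (simp_all add: slot)
  finally show ?thesis unfolding f_def U_def .
qed

lemma nfpl_expected_cost_le:
  fixes r :: "nat \<Rightarrow> real^'n"
  assumes M: "is_min_oracle C M" and \<eta>: "0 < \<eta>" and r: "\<And>t i. 0 \<le> r t $ i"
    and x: "x \<in> capped_simplex C"
  shows "nfpl_expected_cost T M \<eta> r
    \<le> (\<Sum>t<T. r t \<bullet> x) + \<eta> * real C + (\<Sum>t<T. (\<Sum>i\<in>UNIV. r t $ i)\<^sup>2) / \<eta>"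
proof -
  define U where "U = (unif_box \<eta> :: (real^'n) measure)"
  interpret U: prob_space U unfolding U_def by (rule prob_space_unif_box[OF \<eta>])
  define lead where "lead t v = r t \<bullet> M ((\<Sum>s<Suc t. r s) + v)" for t v
  have lead_int: "integrable U (lead t)" for t
    unfolding lead_def U_def by (rule integrable_unif_box_min_oracle_inner[OF M \<eta> r[of t]])
  \<comment> \<open>The leader of slot \<open>t\<close> is the decision played at slot \<open>t\<close> with the noise shifted by \<open>r t\<close>.\<close>
  have stable: "(\<integral>v. r t \<bullet> M ((\<Sum>s<t. r s) + v) \<partial>U) \<le> (\<integral>v. lead t v \<partial>U) + (\<Sum>i\<in>UNIV. r t $ i)\<^sup>2 / \<eta>"
    for t
  proof -
    have "(\<integral>v. r t \<bullet> M ((\<Sum>s<t. r s) + v) \<partial>U)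
        \<le> (\<integral>v. r t \<bullet> M ((\<Sum>s<t. r s) + (r t + v)) \<partial>U) + (\<Sum>i\<in>UNIV. r t $ i) * (\<Sum>i\<in>UNIV. r t $ i) / \<eta>"
      unfolding U_def
      by (rule unif_box_stability[OF \<eta> borel_measurable_min_oracle_inner[OF M, of "r t" "\<Sum>s<t. r s"]
          min_oracle_inner_nonneg[OF M r[of t]] min_oracle_inner_le_sum[OF M r[of t]] r[of t]])
    moreover have "(\<lambda>v. r t \<bullet> M ((\<Sum>s<t. r s) + (r t + v))) = lead t"
      by (simp add: lead_def add.assoc fun_eq_iff)
    ultimately show ?thesis by (simp add: power2_eq_square)
  qed
  have leader: "(\<integral>v. (\<Sum>t<T. lead t v) \<partial>U) \<le> (\<Sum>t<T. r t \<bullet> x) + \<eta> * real C"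
  proof (rule U.integral_le_const)
    show "integrable U (\<lambda>v. \<Sum>t<T. lead t v)" using lead_int by auto
    show "AE v in U. (\<Sum>t<T. lead t v) \<le> (\<Sum>t<T. r t \<bullet> x) + \<eta> * real C"
      unfolding U_def unif_box_def
    proof (rule AE_uniform_measureI[OF _ AE_I2], simp, rule impI)
      fix v :: "real^'n" assume "v \<in> cbox 0 (\<chi> i. \<eta>)"
      then have "0 \<le> v $ i" "v $ i \<le> \<eta>" for i by (simp_all add: mem_box_cart)
      then show "(\<Sum>t<T. lead t v) \<le> (\<Sum>t<T. r t \<bullet> x) + \<eta> * real C"
        unfolding lead_def by (rule be_the_leader_regret[OF M x])
    qed
  qed
  have "nfpl_expected_cost T M \<eta> r = (\<Sum>t<T. \<integral>v. r t \<bullet> M ((\<Sum>s<t. r s) + v) \<partial>U)"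
    unfolding U_def by (rule nfpl_expected_cost_eq_sum[OF M \<eta> r])
  also have "\<dots> \<le> (\<Sum>t<T. (\<integral>v. lead t v \<partial>U) + (\<Sum>i\<in>UNIV. r t $ i)\<^sup>2 / \<eta>)"
    by (intro sum_mono stable)
  also have "\<dots> = (\<integral>v. (\<Sum>t<T. lead t v) \<partial>U) + (\<Sum>t<T. (\<Sum>i\<in>UNIV. r t $ i)\<^sup>2) / \<eta>"
    using lead_int by (simp add: sum.distrib sum_divide_distrib)
  finally show ?thesis using leader by linarith
qed

lemma nfpl_regret_le:
  fixes r :: "nat \<Rightarrow> real^'n"
  assumes M: "is_min_oracle C M" and \<eta>: "0 < \<eta>" and r: "\<And>t i. 0 \<le> r t $ i"
  shows "nfpl_regret C T M \<eta> r \<le> \<eta> * real C + (\<Sum>t<T. (\<Sum>i\<in>UNIV. r t $ i)\<^sup>2) / \<eta>"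
proof -
  have ne: "capped_simplex C \<noteq> ({} :: (real^'n) set)"
    using min_oracle_in_capped_simplex[OF M, of 0] by (metis equals0D)
  have "nfpl_expected_cost T M \<eta> r - (\<eta> * real C + (\<Sum>t<T. (\<Sum>i\<in>UNIV. r t $ i)\<^sup>2) / \<eta>)
      \<le> (INF x\<in>capped_simplex C. \<Sum>t<T. r t \<bullet> x)"
  proof (rule cINF_greatest[OF ne])
    fix x :: "real^'n" assume "x \<in> capped_simplex C"
    from nfpl_expected_cost_le[where r=r and T=T, OF M \<eta> r this]
    show "nfpl_expected_cost T M \<eta> r - (\<eta> * real C + (\<Sum>t<T. (\<Sum>i\<in>UNIV. r t $ i)\<^sup>2) / \<eta>)
        \<le> (\<Sum>t<T. r t \<bullet> x)" by linarith
  qed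
  then show ?thesis unfolding nfpl_regret_def by linarith
qed

lemma tuned_learning_rate_bound:
  fixes B C T :: real
  assumes B: "0 < B" and C: "0 < C" and T: "0 < T"
  shows "B * sqrt (T / (2 * C)) * C + T * B\<^sup>2 / (B * sqrt (T / (2 * C))) \<le> 2 * sqrt 2 * B * sqrt (C * T)"
proof -
  define q where "q = sqrt (T / (2 * C))"
  define s where "s = sqrt (C * T)"
  have q: "0 < q" and q2: "q\<^sup>2 = T / (2 * C)" using C T by (simp_all add: q_def)
  have s: "0 \<le> s" and s2: "s\<^sup>2 = C * T" using C T by (simp_all add: s_def)
  have "(sqrt 2 * s * q)\<^sup>2 = 2 * s\<^sup>2 * q\<^sup>2" by (simp add: power_mult_distrib)
  also have "\<dots> = T\<^sup>2" unfolding s2 q2 using C by (simp add: power2_eq_square)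
  finally have sq: "sqrt 2 * s * q = T"
    using q s T by (simp add: power2_eq_iff_nonneg)
  have "B * q * C + T * B\<^sup>2 / (B * q) = B * (C * q\<^sup>2 + T) / q"
    using B q by (simp add: field_simps power2_eq_square)
  also have "\<dots> = 3 / 2 * B * T / q" using C by (simp add: q2)
  also have "\<dots> \<le> 2 * B * T / q" using B T q by (intro divide_right_mono) auto
  also have "\<dots> = 2 * sqrt 2 * B * s" using q by (simp add: sq[symmetric])
  finally show ?thesis unfolding q_def s_def .
qed

theorem corollary1:
  fixes C B T :: nat
    and r :: "nat \<Rightarrow> real^'n"
    and M :: "real^'n \<Rightarrow> real^'n"
  assumes "1 \<le> C" and "real C < real CARD('n) / 2"
    and "1 \<le> B" and "1 \<le> T"
    and "\<And>t i. r t $ i \<in> \<nat>"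
    and "\<And>t. (\<Sum>i\<in>UNIV. r t $ i) = real B"
    and "is_min_oracle C M"
  shows "nfpl_regret C T M (real B * sqrt (real T / (2 * real C))) r
           \<le> 2 * sqrt 2 * real B * sqrt (real C * real T)"
proof -
  define \<eta> where "\<eta> = real B * sqrt (real T / (2 * real C))"
  have \<eta>: "0 < \<eta>" using assms(1,3,4) by (simp add: \<eta>_def)
  have r: "0 \<le> r t $ i" for t i using assms(5)[of t i] by (auto elim: Nats_cases)
  have "nfpl_regret C T M \<eta> r \<le> \<eta> * real C + (\<Sum>t<T. (\<Sum>i\<in>UNIV. r t $ i)\<^sup>2) / \<eta>"
    by (rule nfpl_regret_le[where r=r, OF assms(7) \<eta> r])
  also have "\<dots> = \<eta> * real C + real T * (real B)\<^sup>2 / \<eta>" by (simp add: assms(6))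
  also have "\<dots> \<le> 2 * sqrt 2 * real B * sqrt (real C * real T)"
    unfolding \<eta>_def using assms(1,3,4) by (intro tuned_learning_rate_bound) auto
  finally show ?thesis unfolding \<eta>_def .
qed

end
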